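(* For every integer $n\ge 2$ and every nonzero real $x$, $$O_{n}'(x)+\frac{n}{x}O_{n}(x)=\sum_{j=0}^{\lfloor (n-2)/2\rfloor}\frac{n-1-2j}{x^{2j+1}}\,O_{n-1-2j}(x),$$ where $O_n'$ denotes the derivative of $O_n$ with respect to $x$.
   Context: For a nonzero real number $x$, the Oresme polynomials $O_n(x)$, $n\ge 0$, are defined by $O_{0}(x)=0$, $O_{1}(x)=\frac{1}{x}$, and $O_{n+1}(x)=O_{n}(x)-\frac{1}{x^{2}}O_{n-1}(x)$ for all $n\ge 1$; each $O_n$ is thus a rational function of $x$ (a polynomial in $1/x$), differentiable on $x\neq 0$. *)

theory Defs
  imports "HOL-Analysis.Analysis"
begin

fun oresme :: "nat \<Rightarrow> real \<Rightarrow> real" where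
  "oresme 0 x = 0"
| "oresme (Suc 0) x = 1 / x"
| "oresme (Suc (Suc n)) x = oresme (Suc n) x - (1 / x^2) * oresme n x"

end

theory Submission
  imports Defs
begin

text \<open>Write \<open>D\<^sub>n = O\<^sub>n' + (n/x) O\<^sub>n\<close> and \<open>S\<^sub>n\<close> for the right-hand side. Differentiating the
  recurrence of the Oresme polynomials shows \<open>D\<^sub>n\<^sub>+\<^sub>2 = D\<^sub>n\<^sub>+\<^sub>1 - D\<^sub>n/x\<^sup>2 + O\<^sub>n\<^sub>+\<^sub>1/x\<close> with
  \<open>D\<^sub>0 = D\<^sub>1 = 0\<close>. Splitting off the first summand gives \<open>S\<^sub>n\<^sub>+\<^sub>2 = ((n+1)/x) O\<^sub>n\<^sub>+\<^sub>1 + S\<^sub>n/x\<^sup>2\<close>,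
  and combining this with the recurrence of \<open>O\<close> yields \<open>S\<^sub>n\<^sub>+\<^sub>1 = (n/x) O\<^sub>n\<^sub>+\<^sub>1 + 2 S\<^sub>n/x\<^sup>2\<close>;
  together they show that \<open>S\<close> obeys the same recurrence and initial values as \<open>D\<close>.\<close>

fun oresme_deriv :: "nat \<Rightarrow> real \<Rightarrow> real" where
  "oresme_deriv 0 x = 0"
| "oresme_deriv (Suc 0) x = - 1 / x^2"
| "oresme_deriv (Suc (Suc n)) x =
     oresme_deriv (Suc n) x - (1 / x^2) * oresme_deriv n x + 2 / x^3 * oresme n x"

lemma has_real_derivative_oresme:
  assumes "x \<noteq> 0"
  shows "(oresme n has_real_derivative oresme_deriv n x) (at x)"
  using assms
proof (induction n x rule: oresme.induct)
  case (1 x)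
  then show ?case by simp
next
  case (2 x)
  have "oresme (Suc 0) = (\<lambda>x. 1 / x)" by (rule ext) simp
  with 2 show ?case
    by (auto intro!: derivative_eq_intros simp: power2_eq_square)
next
  case (3 n x)
  have "oresme (Suc (Suc n)) = (\<lambda>x. oresme (Suc n) x - (1 / x^2) * oresme n x)"
    by (rule ext) simp
  with 3 show ?case
    by (auto intro!: derivative_eq_intros simp: field_simps power2_eq_square power3_eq_cube)
qed

lemma deriv_oresme: "x \<noteq> 0 \<Longrightarrow> deriv (oresme n) x = oresme_deriv n x"
  by (rule DERIV_imp_deriv) (rule has_real_derivative_oresme)

definition oresme_sum :: "nat \<Rightarrow> real \<Rightarrow> real" where
  "oresme_sum n x = (\<Sum>j<n div 2. (real (n - 1 - 2*j) / x^(2*j+1)) * oresme (n - 1 - 2*j) x)"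

lemma oresme_sum_0 [simp]: "oresme_sum 0 x = 0"
  and oresme_sum_1 [simp]: "oresme_sum (Suc 0) x = 0"
  by (simp_all add: oresme_sum_def)

lemma oresme_sum_Suc_Suc:
  "oresme_sum (Suc (Suc n)) x = real (Suc n) / x * oresme (Suc n) x + oresme_sum n x / x^2"
proof -
  have "oresme_sum (Suc (Suc n)) x
      = (\<Sum>j<Suc (n div 2). (real (Suc n - 2*j) / x^(2*j+1)) * oresme (Suc n - 2*j) x)"
    unfolding oresme_sum_def by simp
  also have "\<dots> = real (Suc n) / x * oresme (Suc n) x
     + (\<Sum>j<n div 2. (real (Suc n - 2*Suc j) / x^(2*Suc j+1)) * oresme (Suc n - 2*Suc j) x)"
    by (subst sum.lessThan_Suc_shift) simp
  also have "(\<Sum>j<n div 2. (real (Suc n - 2*Suc j) / x^(2*Suc j+1)) * oresme (Suc n - 2*Suc j) x)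
      = oresme_sum n x / x^2"
    unfolding oresme_sum_def sum_divide_distrib
    by (rule sum.cong) (auto simp: field_simps power2_eq_square)
  finally show ?thesis .
qed

lemma oresme_sum_Suc:
  assumes "x \<noteq> 0"
  shows "oresme_sum (Suc n) x = real n / x * oresme (Suc n) x + 2 * oresme_sum n x / x^2"
proof (induction n rule: induct_nat_012)
  case (ge2 n)
  have "oresme_sum (Suc (Suc (Suc n))) x
      = real (Suc (Suc n)) / x * oresme (Suc (Suc n)) x
        + (real n / x * oresme (Suc n) x + 2 * oresme_sum n x / x^2) / x^2"
    using oresme_sum_Suc_Suc[of "Suc n" x] ge2(1) by simp
  also have "\<dots> = real (Suc (Suc n)) / x * oresme (Suc (Suc (Suc n))) x
      + 2 * (real (Suc n) / x * oresme (Suc n) x + oresme_sum n x / x^2) / x^2"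
    using assms by (simp add: field_simps power2_eq_square power3_eq_cube)
  finally show ?case
    by (simp only: oresme_sum_Suc_Suc)
qed (simp_all add: oresme_sum_def)

lemma oresme_sum_recurrence:
  assumes "x \<noteq> 0"
  shows "oresme_sum (Suc (Suc n)) x
       = oresme_sum (Suc n) x - oresme_sum n x / x^2 + oresme (Suc n) x / x"
  using oresme_sum_Suc_Suc[of n x] oresme_sum_Suc[OF assms, of n] assms
  by (simp add: field_simps power2_eq_square)

lemma oresme_deriv_eq_oresme_sum:
  assumes "x \<noteq> 0"
  shows "oresme_deriv n x + real n / x * oresme n x = oresme_sum n x"
proof (induction n rule: induct_nat_012)
  case 1
  with assms show ?case by (simp add: power2_eq_square)
next
  case (ge2 n)
  have "oresme_deriv (Suc (Suc n)) x + real (Suc (Suc n)) / x * oresme (Suc (Suc n)) x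
      = (oresme_deriv (Suc n) x + real (Suc n) / x * oresme (Suc n) x)
        - (oresme_deriv n x + real n / x * oresme n x) / x^2 + oresme (Suc n) x / x"
    using assms by (simp add: field_simps power2_eq_square power3_eq_cube)
  with ge2 show ?case
    using oresme_sum_recurrence[OF assms] by simp
qed simp

theorem mainTheorem13:
  fixes n :: nat and x :: real
  assumes "n \<ge> 2" and "x \<noteq> 0"
  shows "deriv (oresme n) x + (real n / x) * oresme n x
       = (\<Sum>j = 0..(n - 2) div 2. (real (n - 1 - 2*j) / x^(2*j+1)) * oresme (n - 1 - 2*j) x)"
proof -
  have "{0..(n - 2) div 2} = {..<n div 2}"
    using assms(1) by (auto simp: le_div_geq)
  then show ?thesis
    using oresme_deriv_eq_oresme_sum[OF assms(2), of n] deriv_oresme[OF assms(2)]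
    unfolding oresme_sum_def by simp
qed

end
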